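(* For every integer $n\ge 2$, the friendship graph $F_n$ is not $\mathcal{D}$-unique. Specifically, let $H_n$ be the graph on vertices $u,a_1,\dots,a_n,b_1,\dots,b_n$ with edges $ua_i$, $ub_i$, $a_ib_i$ for $1\le i\le n$, and $b_ib_j$ for all $1\le i<j\le n$ (this is $B_n/v$, the contraction of the book graph $B_n$ at an endpoint $v$ of its common edge). Then $H_n$ is not isomorphic to $F_n$, but $D(H_n,x)=D(F_n,x)=(2x+x^2)^n+x(1+x)^{2n}$. *)

theory Defs
  imports Main "HOL-Computational_Algebra.Polynomial"
begin

definition simple_graph :: "'a set \<Rightarrow> 'a set set \<Rightarrow> bool" where
  "simple_graph V E \<longleftrightarrow> finite V \<and> (\<forall>e\<in>E. e \<subseteq> V \<and> card e = 2)"

definition dominating_set :: "'a set \<Rightarrow> 'a set set \<Rightarrow> 'a set \<Rightarrow> bool" where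
  "dominating_set V E S \<longleftrightarrow> S \<subseteq> V \<and> (\<forall>v\<in>V. v \<in> S \<or> (\<exists>w\<in>S. {v, w} \<in> E))"

definition dom_poly :: "'a set \<Rightarrow> 'a set set \<Rightarrow> int poly" where
  "dom_poly V E = (\<Sum>S\<in>{S. dominating_set V E S}. monom 1 (card S))"

definition graph_iso :: "'a set \<Rightarrow> 'a set set \<Rightarrow> 'b set \<Rightarrow> 'b set set \<Rightarrow> bool" where
  "graph_iso V1 E1 V2 E2 \<longleftrightarrow>
     (\<exists>f. bij_betw f V1 V2 \<and> (\<forall>x\<in>V1. \<forall>y\<in>V1. {x, y} \<in> E1 \<longleftrightarrow> {f x, f y} \<in> E2))"

datatype vtx = U | A nat | B nat

definition FH_verts :: "nat \<Rightarrow> vtx set" where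
  "FH_verts n = {U} \<union> A ` {1..n} \<union> B ` {1..n}"

definition F_edges :: "nat \<Rightarrow> vtx set set" where
  "F_edges n = (\<Union>i\<in>{1..n}. {{U, A i}, {U, B i}, {A i, B i}})"

definition H_edges :: "nat \<Rightarrow> vtx set set" where
  "H_edges n = F_edges n \<union> {{B i, B j} | i j. 1 \<le> i \<and> i < j \<and> j \<le> n}"

end

theory Submission
  imports Defs "HOL-Library.Disjoint_Sets"
begin

text \<open>
  Both graphs have the universal vertex \<open>u\<close>, and in both the neighbours of \<open>a\<^sub>i\<close> are
  exactly \<open>u\<close> and \<open>b\<^sub>i\<close>; the extra edges \<open>b\<^sub>ib\<^sub>j\<close> of \<open>H\<^sub>n\<close> never help to dominate an \<open>a\<^sub>i\<close>.
  Hence in both graphs a set is dominating iff it contains \<open>u\<close> or meets every pair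
  \<open>{a\<^sub>i, b\<^sub>i}\<close>, so the two graphs have the same dominating sets. Counting them gives
  \<open>x(1+x)\<^sup>2\<^sup>n\<close> for the sets containing \<open>u\<close> and \<open>((1+x)\<^sup>2 - 1)\<^sup>n\<close> for the others.
  The graphs are not isomorphic because \<open>H\<^sub>n\<close> has strictly more edges.
\<close>

subsection \<open>Generating polynomials of families of sets\<close>

lemma monom_one_card_insert:
  "finite T \<Longrightarrow> a \<notin> T \<Longrightarrow> monom (1::'a::comm_semiring_1) (card (insert a T)) = [:0, 1:] * monom 1 (card T)"
  by (simp add: monom_Suc)

lemma sum_insert_Pow_monom_card:
  assumes "finite X" "a \<notin> X"
  shows "(\<Sum>S\<in>insert a ` Pow X. monom (1::'a::comm_semiring_1) (card S))
    = [:0, 1:] * (\<Sum>T\<in>Pow X. monom 1 (card T))"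
proof -
  have "inj_on (insert a) (Pow X)"
    using assms(2) by (auto simp: inj_on_def)
  then have "(\<Sum>S\<in>insert a ` Pow X. monom (1::'a) (card S)) = (\<Sum>T\<in>Pow X. monom 1 (card (insert a T)))"
    by (simp add: sum.reindex)
  also have "\<dots> = (\<Sum>T\<in>Pow X. [:0, 1:] * monom 1 (card T))"
    using assms by (intro sum.cong refl monom_one_card_insert) (auto intro: finite_subset)
  finally show ?thesis
    by (simp add: sum_distrib_left)
qed

lemma sum_Pow_monom_card:
  "finite X \<Longrightarrow> (\<Sum>T\<in>Pow X. monom (1::'a::comm_semiring_1) (card T)) = [:1, 1:] ^ card X"
proof (induction X rule: finite_induct)
  case empty
  show ?case
    by (simp add: one_pCons)
next
  case (insert a X)
  have "Pow X \<inter> insert a ` Pow X = {}"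
    using insert.hyps(2) by auto
  then have "(\<Sum>T\<in>Pow (insert a X). monom (1::'a) (card T))
      = (\<Sum>T\<in>Pow X. monom 1 (card T)) + [:0, 1:] * (\<Sum>T\<in>Pow X. monom 1 (card T))"
    unfolding Pow_insert using insert.hyps
    by (simp add: sum.union_disjoint sum_insert_Pow_monom_card)
  also have "\<dots> = [:1, 1:] * [:1, 1:] ^ card X"
    by (simp add: insert.IH algebra_simps)
  finally show ?case
    using insert.hyps by simp
qed

definition hitting_sets :: "('i \<Rightarrow> 'a set) \<Rightarrow> 'i set \<Rightarrow> 'a set set" where
  "hitting_sets P I = {S. S \<subseteq> \<Union>(P ` I) \<and> (\<forall>i\<in>I. S \<inter> P i \<noteq> {})}"

lemma finite_hitting_sets:
  "finite I \<Longrightarrow> \<forall>i\<in>I. finite (P i) \<Longrightarrow> finite (hitting_sets P I)"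
  by (rule finite_subset[of _ "Pow (\<Union>(P ` I))"]) (auto simp: hitting_sets_def)

lemma hitting_sets_insert:
  assumes "j \<notin> I"
  shows "hitting_sets P (insert j I)
    = (\<lambda>(T, R). T \<union> R) ` (hitting_sets P I \<times> (Pow (P j) - {{}}))"
proof (intro set_eqI iffI)
  fix S assume S: "S \<in> hitting_sets P (insert j I)"
  then have "S \<inter> \<Union>(P ` I) \<in> hitting_sets P I" "S \<inter> P j \<in> Pow (P j) - {{}}"
    by (auto simp: hitting_sets_def)
  moreover have "S = (S \<inter> \<Union>(P ` I)) \<union> (S \<inter> P j)"
    using S by (auto simp: hitting_sets_def)
  ultimately show "S \<in> (\<lambda>(T, R). T \<union> R) ` (hitting_sets P I \<times> (Pow (P j) - {{}}))"
    by (intro image_eqI[of _ _ "(S \<inter> \<Union>(P ` I), S \<inter> P j)"]) auto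
qed (auto simp: hitting_sets_def)

lemma sum_hitting_sets_monom_card:
  fixes P :: "'i \<Rightarrow> 'a set"
  assumes "finite I" "\<forall>i\<in>I. finite (P i)" "disjoint_family_on P I"
  shows "(\<Sum>S\<in>hitting_sets P I. monom (1::'b::comm_ring_1) (card S))
    = (\<Prod>i\<in>I. [:1, 1:] ^ card (P i) - 1)"
  using assms
proof (induction I rule: finite_induct)
  case empty
  have "hitting_sets P {} = {{}}"
    by (auto simp: hitting_sets_def)
  then show ?case
    by simp
next
  case (insert j I)
  let ?H = "hitting_sets P I" and ?N = "Pow (P j) - {{}}"
  have fin_blocks: "\<forall>i\<in>I. finite (P i)" "finite (P j)"
    using insert.prems(1) by auto
  have disjoint: "P j \<inter> \<Union>(P ` I) = {}"
    using insert.prems(2) insert.hyps(2) by (auto simp: disjoint_family_on_def)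
  have split: "T \<subseteq> \<Union>(P ` I) \<and> R \<subseteq> P j"
    if "T \<in> ?H" "R \<in> ?N" for T R
    using that by (auto simp: hitting_sets_def)
  then have recover: "T = (T \<union> R) \<inter> \<Union>(P ` I) \<and> R = (T \<union> R) \<inter> P j"
    if "T \<in> ?H" "R \<in> ?N" for T R
    using that disjoint by blast
  have inj: "inj_on (\<lambda>(T, R). T \<union> R) (?H \<times> ?N)"
  proof (rule inj_onI)
    fix p q assume p: "p \<in> ?H \<times> ?N" and q: "q \<in> ?H \<times> ?N"
      and union: "(\<lambda>(T, R). T \<union> R) p = (\<lambda>(T, R). T \<union> R) q"
    obtain T R T' R' where pq: "p = (T, R)" "q = (T', R')"
      by (cases p, cases q)
    have "T \<in> ?H" "R \<in> ?N" "T' \<in> ?H" "R' \<in> ?N"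
      using p q unfolding pq by auto
    moreover have "T \<union> R = T' \<union> R'"
      using union unfolding pq by simp
    ultimately show "p = q"
      unfolding pq using recover by (metis (no_types, lifting))
  qed
  have "(\<Sum>S\<in>hitting_sets P (insert j I). monom (1::'b) (card S))
      = (\<Sum>(T, R)\<in>?H \<times> ?N. monom 1 (card (T \<union> R)))"
    unfolding hitting_sets_insert[OF insert.hyps(2)] sum.reindex[OF inj] by (simp add: split_def)
  also have "\<dots> = (\<Sum>(T, R)\<in>?H \<times> ?N. monom 1 (card T) * monom 1 (card R))"
  proof (rule sum.cong[OF refl])
    fix p assume "p \<in> ?H \<times> ?N"
    then obtain T R where p: "p = (T, R)" and "T \<in> ?H" "R \<in> ?N"
      by blast
    with split have "T \<subseteq> \<Union>(P ` I)" "R \<subseteq> P j"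
      by auto
    with disjoint fin_blocks insert.hyps(1) have "card (T \<union> R) = card T + card R"
      by (intro card_Un_disjoint) (auto intro: finite_subset)
    then show "(\<lambda>(T, R). monom (1::'b) (card (T \<union> R))) p
        = (\<lambda>(T, R). monom 1 (card T) * monom 1 (card R)) p"
      unfolding p by (simp add: mult_monom)
  qed
  also have "\<dots> = (\<Sum>T\<in>?H. monom 1 (card T)) * (\<Sum>R\<in>?N. monom 1 (card R))"
    by (simp add: sum.cartesian_product[symmetric] sum_product)
  also have "(\<Sum>T\<in>?H. monom (1::'b) (card T)) = (\<Prod>i\<in>I. [:1, 1:] ^ card (P i) - 1)"
    using insert.IH fin_blocks(1) disjoint_family_on_mono[OF subset_insertI insert.prems(2)] .
  also have "(\<Sum>R\<in>?N. monom (1::'b) (card R)) = [:1, 1:] ^ card (P j) - 1"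
    using fin_blocks by (simp add: sum_diff1 sum_Pow_monom_card)
  finally show ?case
    using insert.hyps by (simp add: mult.commute)
qed

subsection \<open>The dominating sets of \<open>F\<^sub>n\<close> and \<open>H\<^sub>n\<close>\<close>

definition blade :: "nat \<Rightarrow> vtx set" where
  "blade i = {A i, B i}"

lemma FH_verts_eq: "FH_verts n = insert U (\<Union>(blade ` {1..n}))"
  by (auto simp: FH_verts_def blade_def)

lemma disjoint_family_blade: "disjoint_family_on blade I"
  by (auto simp: disjoint_family_on_def blade_def)

lemma dominating_set_mono_edges:
  "dominating_set V E S \<Longrightarrow> E \<subseteq> E' \<Longrightarrow> dominating_set V E' S"
  unfolding dominating_set_def by blast

lemma F_edges_subset_H_edges: "F_edges n \<subseteq> H_edges n"
  by (auto simp: H_edges_def)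

lemma H_edges_neighbour_A: "{A i, w} \<in> H_edges n \<Longrightarrow> w = U \<or> w = B i"
  by (auto simp: H_edges_def F_edges_def doubleton_eq_iff)

lemma F_edges_iff:
  "{v, w} \<in> F_edges n \<longleftrightarrow> (\<exists>i\<in>{1..n}. {v, w} = {U, A i} \<or> {v, w} = {U, B i} \<or> {v, w} = {A i, B i})"
  by (auto simp: F_edges_def)

lemma dominating_set_F_edges:
  assumes "n \<ge> 1" "S \<subseteq> FH_verts n" "U \<in> S \<or> (\<forall>i\<in>{1..n}. S \<inter> blade i \<noteq> {})"
  shows "dominating_set (FH_verts n) (F_edges n) S"
  unfolding dominating_set_def
proof (intro conjI ballI)
  fix v assume v: "v \<in> FH_verts n"
  show "v \<in> S \<or> (\<exists>w\<in>S. {v, w} \<in> F_edges n)"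
  proof (cases "U \<in> S")
    case True
    then show ?thesis
      using v by (cases v) (auto simp: FH_verts_def F_edges_iff insert_commute)
  next
    case False
    then have hit: "\<forall>i\<in>{1..n}. A i \<in> S \<or> B i \<in> S"
      using assms(3) by (auto simp: blade_def)
    show ?thesis
    proof (cases "v = U")
      case True
      have "1 \<in> {1..n}"
        using assms(1) by simp
      with hit show ?thesis
        unfolding True F_edges_iff by blast
    next
      case False
      with hit show ?thesis
        using v by (cases v) (auto simp: FH_verts_def F_edges_iff insert_commute)
    qed
  qed
qed (use assms(2) in blast)

lemma dominating_set_between_F_H:
  assumes "n \<ge> 1" "F_edges n \<subseteq> E" "E \<subseteq> H_edges n"
  shows "dominating_set (FH_verts n) E S
    \<longleftrightarrow> S \<subseteq> FH_verts n \<and> (U \<in> S \<or> (\<forall>i\<in>{1..n}. S \<inter> blade i \<noteq> {}))"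
proof
  assume dom: "dominating_set (FH_verts n) E S"
  have "S \<inter> blade i \<noteq> {}" if "U \<notin> S" "i \<in> {1..n}" for i
  proof -
    have "A i \<in> FH_verts n"
      using that(2) by (simp add: FH_verts_def)
    then have "A i \<in> S \<or> (\<exists>w\<in>S. {A i, w} \<in> H_edges n)"
      using dom assms(3) unfolding dominating_set_def by blast
    then show ?thesis
      using that(1) H_edges_neighbour_A unfolding blade_def by blast
  qed
  moreover have "S \<subseteq> FH_verts n"
    using dom by (simp add: dominating_set_def)
  ultimately show "S \<subseteq> FH_verts n \<and> (U \<in> S \<or> (\<forall>i\<in>{1..n}. S \<inter> blade i \<noteq> {}))"
    by blast
next
  assume "S \<subseteq> FH_verts n \<and> (U \<in> S \<or> (\<forall>i\<in>{1..n}. S \<inter> blade i \<noteq> {}))"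
  then have "dominating_set (FH_verts n) (F_edges n) S"
    using dominating_set_F_edges[OF assms(1)] by blast
  then show "dominating_set (FH_verts n) E S"
    using assms(2) by (rule dominating_set_mono_edges)
qed

lemma dominating_sets_F_edges:
  assumes "n \<ge> 1"
  shows "{S. dominating_set (FH_verts n) (F_edges n) S}
    = insert U ` Pow (\<Union>(blade ` {1..n})) \<union> hitting_sets blade {1..n}"
    (is "_ = insert U ` Pow ?W \<union> _")
proof (intro set_eqI)
  fix S
  have "U \<notin> ?W"
    by (auto simp: blade_def)
  have "dominating_set (FH_verts n) (F_edges n) S
      \<longleftrightarrow> S \<subseteq> insert U ?W \<and> (U \<in> S \<or> (\<forall>i\<in>{1..n}. S \<inter> blade i \<noteq> {}))"
    using dominating_set_between_F_H[OF assms order_refl F_edges_subset_H_edges] by (simp add: FH_verts_eq)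
  moreover have "S \<subseteq> insert U ?W \<and> U \<in> S \<longleftrightarrow> S \<in> insert U ` Pow ?W"
  proof
    assume "S \<subseteq> insert U ?W \<and> U \<in> S"
    then have "S = insert U (S - {U})" "S - {U} \<in> Pow ?W"
      by auto
    then show "S \<in> insert U ` Pow ?W"
      by (rule image_eqI)
  qed (use \<open>U \<notin> ?W\<close> in auto)
  moreover have "S \<subseteq> insert U ?W \<and> U \<notin> S \<and> (\<forall>i\<in>{1..n}. S \<inter> blade i \<noteq> {})
      \<longleftrightarrow> S \<in> hitting_sets blade {1..n}"
    using \<open>U \<notin> ?W\<close> by (auto simp: hitting_sets_def)
  ultimately show "S \<in> {S. dominating_set (FH_verts n) (F_edges n) S}
      \<longleftrightarrow> S \<in> insert U ` Pow ?W \<union> hitting_sets blade {1..n}"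
    unfolding mem_Collect_eq Un_iff by argo
qed

lemma dom_poly_H_edges_eq_F_edges:
  assumes "n \<ge> 1"
  shows "dom_poly (FH_verts n) (H_edges n) = dom_poly (FH_verts n) (F_edges n)"
proof -
  have "dominating_set (FH_verts n) (H_edges n) = dominating_set (FH_verts n) (F_edges n)"
  proof
    fix S
    show "dominating_set (FH_verts n) (H_edges n) S = dominating_set (FH_verts n) (F_edges n) S"
      unfolding dominating_set_between_F_H[OF assms F_edges_subset_H_edges order_refl]
        dominating_set_between_F_H[OF assms order_refl F_edges_subset_H_edges] ..
  qed
  then show ?thesis
    unfolding dom_poly_def by (rule arg_cong)
qed

lemma dom_poly_F_edges:
  assumes "n \<ge> 1"
  shows "dom_poly (FH_verts n) (F_edges n) = [:0, 2, 1:] ^ n + [:0, 1:] * [:1, 1:] ^ (2 * n)"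
proof -
  let ?W = "\<Union>(blade ` {1..n})"
  have fin: "finite ?W" "\<forall>i\<in>{1..n}. finite (blade i)"
    by (auto simp: blade_def)
  have "U \<notin> ?W"
    by (auto simp: blade_def)
  then have disj: "hitting_sets blade {1..n} \<inter> insert U ` Pow ?W = {}"
    by (auto simp: hitting_sets_def)
  have card_W: "card ?W = 2 * n"
    using card_UN_disjoint[of "{1..n}" blade] fin disjoint_family_blade
    by (auto simp: disjoint_family_on_def blade_def)
  have sum_with_U: "(\<Sum>S\<in>insert U ` Pow ?W. monom 1 (card S)) = [:0, 1:] * [:1, 1 :: int:] ^ (2 * n)"
    using fin \<open>U \<notin> ?W\<close> card_W by (simp add: sum_insert_Pow_monom_card sum_Pow_monom_card)
  have "(\<Sum>S\<in>hitting_sets blade {1..n}. monom 1 (card S)) = (\<Prod>i\<in>{1..n}. [:1, 1 :: int:] ^ card (blade i) - 1)"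
    using fin disjoint_family_blade by (simp add: sum_hitting_sets_monom_card)
  also have "\<dots> = [:0, 2, 1:] ^ n"
  proof -
    have "[:1, 1 :: int:] ^ card (blade i) - 1 = [:0, 2, 1:]" for i
      by (simp add: blade_def power2_eq_square one_pCons numeral_2_eq_2)
    then show ?thesis
      by simp
  qed
  finally have sum_hitting: "(\<Sum>S\<in>hitting_sets blade {1..n}. monom 1 (card S)) = [:0, 2, 1 :: int:] ^ n" .
  have "finite (hitting_sets blade {1..n})" "finite (insert U ` Pow ?W)"
    using fin by (simp_all add: finite_hitting_sets)
  then have "dom_poly (FH_verts n) (F_edges n)
      = (\<Sum>S\<in>hitting_sets blade {1..n}. monom 1 (card S)) + (\<Sum>S\<in>insert U ` Pow ?W. monom 1 (card S))"
    unfolding dom_poly_def dominating_sets_F_edges[OF assms] Un_commute[of "insert U ` _"]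
    using disj by (rule sum.union_disjoint)
  then show ?thesis
    unfolding sum_with_U sum_hitting .
qed

lemma simple_graph_edge_obtain:
  assumes "simple_graph V E" "e \<in> E"
  obtains x y where "x \<in> V" "y \<in> V" "e = {x, y}"
proof -
  have "e \<subseteq> V" "card e = 2"
    using assms by (auto simp: simple_graph_def)
  then show thesis
    using that by (metis card_2_iff insert_subset)
qed

lemma simple_graph_finite_edges: "simple_graph V E \<Longrightarrow> finite E"
  by (rule finite_subset[of E "Pow V"]) (auto simp: simple_graph_def)

lemma graph_iso_card_edges:
  assumes "simple_graph V1 E1" "simple_graph V2 E2" "graph_iso V1 E1 V2 E2"
  shows "card E1 = card E2"
proof -
  obtain f where bij: "bij_betw f V1 V2"
    and edge_iff: "\<forall>x\<in>V1. \<forall>y\<in>V1. {x, y} \<in> E1 \<longleftrightarrow> {f x, f y} \<in> E2"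
    using assms(3) unfolding graph_iso_def by blast
  have "bij_betw (image f) E1 E2"
  proof (rule bij_betw_imageI)
    have "E1 \<subseteq> Pow V1"
      using assms(1) by (auto simp: simple_graph_def)
    then show "inj_on (image f) E1"
      using inj_on_image_Pow[OF bij_betw_imp_inj_on[OF bij]] by (rule inj_on_subset[rotated])
    show "image f ` E1 = E2"
    proof (intro subset_antisym subsetI)
      fix e' assume "e' \<in> image f ` E1"
      then obtain e where e: "e \<in> E1" "e' = f ` e"
        by blast
      with assms(1) obtain x y where "x \<in> V1" "y \<in> V1" "e = {x, y}"
        by (elim simple_graph_edge_obtain)
      with e edge_iff show "e' \<in> E2"
        by simp
    next
      fix e' assume "e' \<in> E2"
      with assms(2) obtain x' y' where "x' \<in> V2" "y' \<in> V2" "e' = {x', y'}"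
        by (elim simple_graph_edge_obtain)
      moreover have "V2 = f ` V1"
        using bij by (simp add: bij_betw_def)
      ultimately obtain x y where "x \<in> V1" "y \<in> V1" "e' = f ` {x, y}"
        by auto
      moreover from this edge_iff \<open>e' \<in> E2\<close> have "{x, y} \<in> E1"
        by simp
      ultimately show "e' \<in> image f ` E1"
        by blast
    qed
  qed
  then show ?thesis
    by (rule bij_betw_same_card)
qed

lemma simple_graph_F_edges: "simple_graph (FH_verts n) (F_edges n)"
  by (auto simp: simple_graph_def FH_verts_def F_edges_def)

lemma simple_graph_H_edges: "simple_graph (FH_verts n) (H_edges n)"
  by (auto simp: simple_graph_def FH_verts_def H_edges_def F_edges_def)

lemma card_F_edges_less_H_edges:
  assumes "n \<ge> 2"
  shows "card (F_edges n) < card (H_edges n)"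
proof (rule psubset_card_mono)
  show "finite (H_edges n)"
    using simple_graph_H_edges by (rule simple_graph_finite_edges)
  have "{B 1, B 2} \<in> {{B i, B j} | i j. 1 \<le> i \<and> i < j \<and> j \<le> n}"
    using assms by (intro CollectI exI[of _ 1] exI[of _ 2]) simp
  then have "{B 1, B 2} \<in> H_edges n" "{B 1, B 2} \<notin> F_edges n"
    by (auto simp: H_edges_def F_edges_def)
  with F_edges_subset_H_edges show "F_edges n \<subset> H_edges n"
    by blast
qed

theorem mainTheorem7:
  fixes n :: nat
  assumes "n \<ge> 2"
  shows "\<not> graph_iso (FH_verts n) (H_edges n) (FH_verts n) (F_edges n)
    \<and> dom_poly (FH_verts n) (H_edges n) = dom_poly (FH_verts n) (F_edges n)
    \<and> dom_poly (FH_verts n) (F_edges n) = [:0, 2, 1:] ^ n + [:0, 1:] * [:1, 1:] ^ (2 * n)"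
proof (intro conjI)
  have "card (H_edges n) \<noteq> card (F_edges n)"
    using card_F_edges_less_H_edges[OF assms] by simp
  then show "\<not> graph_iso (FH_verts n) (H_edges n) (FH_verts n) (F_edges n)"
    using graph_iso_card_edges[OF simple_graph_H_edges simple_graph_F_edges] by blast
  from assms have "n \<ge> 1"
    by simp
  then show "dom_poly (FH_verts n) (H_edges n) = dom_poly (FH_verts n) (F_edges n)"
    and "dom_poly (FH_verts n) (F_edges n) = [:0, 2, 1:] ^ n + [:0, 1:] * [:1, 1:] ^ (2 * n)"
    by (rule dom_poly_H_edges_eq_F_edges, rule dom_poly_F_edges)
qed

end
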